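(* Let $p,q$ be probability distributions on $\{1,\dots,n\}$ and let $\mathbf p(i,j)$ be a minimum-entropy coupling of $p$ and $q$. Consider the weighted undirected bipartite graph $G$ with vertex set $\{\ell_1,\dots,\ell_n,r_1,\dots,r_n\}$ and edge set $\{(\ell_i,r_j)$ with weight $\mathbf p(i,j) : \mathbf p(i,j)>0\}$. Then $G$ is a forest, and every edge of maximum weight has a leaf of this forest as one of its endpoints.
   Context: A coupling of $p$ and $q$ is a joint distribution $\mathbf p(i,j)\ge 0$ on $\{1,\dots,n\}^2$ with $\sum_j\mathbf p(i,j)=p(i)$ and $\sum_i \mathbf p(i,j)=q(j)$; a minimum-entropy coupling minimizes $\sum_{i,j}\mathbf p(i,j)\log_2(1/\mathbf p(i,j))$. *)

theory Defs
  imports Complex_Main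
begin

definition prob_dist :: "nat \<Rightarrow> (nat \<Rightarrow> real) \<Rightarrow> bool" where
  "prob_dist n p \<longleftrightarrow> (\<forall>i\<in>{1..n}. p i \<ge> 0) \<and> (\<Sum>i=1..n. p i) = 1"

definition is_coupling :: "nat \<Rightarrow> (nat \<Rightarrow> real) \<Rightarrow> (nat \<Rightarrow> real) \<Rightarrow> (nat \<Rightarrow> nat \<Rightarrow> real) \<Rightarrow> bool" where
  "is_coupling n p q P \<longleftrightarrow>
     (\<forall>i\<in>{1..n}. \<forall>j\<in>{1..n}. P i j \<ge> 0) \<and>
     (\<forall>i\<in>{1..n}. (\<Sum>j=1..n. P i j) = p i) \<and>
     (\<forall>j\<in>{1..n}. (\<Sum>i=1..n. P i j) = q j)"

definition coupling_entropy :: "nat \<Rightarrow> (nat \<Rightarrow> nat \<Rightarrow> real) \<Rightarrow> real" where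
  "coupling_entropy n P = (\<Sum>i=1..n. \<Sum>j=1..n. (if P i j = 0 then 0 else P i j * log 2 (1 / P i j)))"

definition min_entropy_coupling :: "nat \<Rightarrow> (nat \<Rightarrow> real) \<Rightarrow> (nat \<Rightarrow> real) \<Rightarrow> (nat \<Rightarrow> nat \<Rightarrow> real) \<Rightarrow> bool" where
  "min_entropy_coupling n p q P \<longleftrightarrow> is_coupling n p q P \<and>
     (\<forall>Q. is_coupling n p q Q \<longrightarrow> coupling_entropy n P \<le> coupling_entropy n Q)"

definition coupling_vertices :: "nat \<Rightarrow> (nat + nat) set" where
  "coupling_vertices n = Inl ` {1..n} \<union> Inr ` {1..n}"

fun coupling_adj :: "nat \<Rightarrow> (nat \<Rightarrow> nat \<Rightarrow> real) \<Rightarrow> nat + nat \<Rightarrow> nat + nat \<Rightarrow> bool" where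
  "coupling_adj n P (Inl i) (Inr j) = (i \<in> {1..n} \<and> j \<in> {1..n} \<and> P i j > 0)"
| "coupling_adj n P (Inr j) (Inl i) = (i \<in> {1..n} \<and> j \<in> {1..n} \<and> P i j > 0)"
| "coupling_adj n P _ _ = False"

definition is_cycle :: "('a \<Rightarrow> 'a \<Rightarrow> bool) \<Rightarrow> 'a list \<Rightarrow> bool" where
  "is_cycle E cs \<longleftrightarrow> length cs \<ge> 3 \<and> distinct cs \<and>
     (\<forall>k. Suc k < length cs \<longrightarrow> E (cs ! k) (cs ! Suc k)) \<and> E (last cs) (hd cs)"

definition is_forest :: "('a \<Rightarrow> 'a \<Rightarrow> bool) \<Rightarrow> bool" where
  "is_forest E \<longleftrightarrow> \<not> (\<exists>cs. is_cycle E cs)"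

definition vdegree :: "('a \<Rightarrow> 'a \<Rightarrow> bool) \<Rightarrow> 'a set \<Rightarrow> 'a \<Rightarrow> nat" where
  "vdegree E V v = card {u \<in> V. E v u}"

definition is_leaf :: "('a \<Rightarrow> 'a \<Rightarrow> bool) \<Rightarrow> 'a set \<Rightarrow> 'a \<Rightarrow> bool" where
  "is_leaf E V v \<longleftrightarrow> v \<in> V \<and> vdegree E V v = 1"

end

theory Submission
  imports Defs
begin

text \<open>
  The entropy of a coupling is \<open>-(1/ln 2) \<Sum> P ln P\<close> and \<open>x ln x\<close> is strictly convex, so a
  minimum-entropy coupling maximises \<open>\<Sum> P ln P\<close> over the polytope of couplings.

  A cycle in the support graph alternates between left and right vertices, hence has even
  length, and giving its edges alternating signs yields a perturbation with zero row and column
  sums, supported where \<open>P > 0\<close>. Moving a little in either direction along it stays a coupling,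
  and by strict convexity one of the two directions increases \<open>\<Sum> P ln P\<close>.

  If neither endpoint of a maximum-weight edge \<open>(i, j)\<close> were a leaf, there would be edges
  \<open>(i, j')\<close> and \<open>(i', j)\<close>, while \<open>(i', j')\<close> is no edge because there is no 4-cycle. Moving
  \<open>t = min (P i j') (P i' j)\<close> from these two cells to \<open>(i, j)\<close> and \<open>(i', j')\<close> keeps a coupling,
  and since \<open>P i j\<close> is maximal it strictly increases \<open>\<Sum> P ln P\<close>.
\<close>

definition xlnx_sum :: "nat \<Rightarrow> (nat \<Rightarrow> nat \<Rightarrow> real) \<Rightarrow> real" where
  "xlnx_sum n P = (\<Sum>(i, j) \<in> {1..n} \<times> {1..n}. P i j * ln (P i j))"

lemma xlnx_above_tangent:
  fixes x y :: real
  assumes "0 < x" "0 \<le> y" "y \<noteq> x"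
  shows "x * ln x + (ln x + 1) * (y - x) < y * ln y"
proof (cases "y = 0")
  case True
  then show ?thesis using assms by (simp add: algebra_simps)
next
  case False
  with assms have y: "0 < y" by simp
  have "ln (x / y) < x / y - 1"
    using ln_le_minus_one[of "x / y"] ln_eq_minus_one[of "x / y"] assms y by fastforce
  then have "y * (ln x - ln y) < y * (x / y - 1)"
    using assms y by (simp add: ln_div)
  then show ?thesis using y by (simp add: algebra_simps)
qed

lemma xlnx_midpoint_strict:
  fixes x d :: real
  assumes "0 < x" "0 \<le> x + d" "0 \<le> x - d" "d \<noteq> 0"
  shows "2 * (x * ln x) < (x + d) * ln (x + d) + (x - d) * ln (x - d)"
  using xlnx_above_tangent[OF assms(1,2)] xlnx_above_tangent[OF assms(1,3)] assms(4)
  by (simp add: algebra_simps)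

lemma xlnx_transfer_strict:
  fixes a c t :: real
  assumes "0 < t" "t \<le> c" "c \<le> a"
  shows "a * ln a + c * ln c < (a + t) * ln (a + t) + (c - t) * ln (c - t)"
proof -
  have "a * ln a + (ln a + 1) * t < (a + t) * ln (a + t)"
    using xlnx_above_tangent[of a "a + t"] assms by simp
  moreover have "c * ln c - (ln c + 1) * t < (c - t) * ln (c - t)"
    using xlnx_above_tangent[of c "c - t"] assms by (simp add: algebra_simps)
  moreover have "ln c * t \<le> ln a * t"
    using assms by (intro mult_right_mono) auto
  ultimately show ?thesis by (simp add: distrib_right)
qed

lemma xlnx_rectangle_gain:
  fixes a b c :: real
  assumes "0 < b" "0 < c" "b \<le> a" "c \<le> a"
  shows "a * ln a + b * ln b + c * ln c <
    (a + min b c) * ln (a + min b c) + (b - min b c) * ln (b - min b c)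
    + (c - min b c) * ln (c - min b c) + min b c * ln (min b c)"
proof (cases "b \<le> c")
  case True
  then show ?thesis using xlnx_transfer_strict[of b c a] assms by (simp add: min_def)
next
  case False
  then show ?thesis using xlnx_transfer_strict[of c b a] assms by (simp add: min_def)
qed

lemma sum_xlnx_midpoint_strict:
  fixes f d :: "'a \<Rightarrow> real"
  assumes "finite A" "a0 \<in> A" "d a0 \<noteq> 0"
    and "\<And>a. a \<in> A \<Longrightarrow> d a \<noteq> 0 \<Longrightarrow> 0 < f a"
    and "\<And>a. a \<in> A \<Longrightarrow> 0 \<le> f a + d a" "\<And>a. a \<in> A \<Longrightarrow> 0 \<le> f a - d a"
  shows "2 * (\<Sum>a\<in>A. f a * ln (f a)) <
    (\<Sum>a\<in>A. (f a + d a) * ln (f a + d a)) + (\<Sum>a\<in>A. (f a - d a) * ln (f a - d a))"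
proof -
  have cell: "2 * (f a * ln (f a)) < (f a + d a) * ln (f a + d a) + (f a - d a) * ln (f a - d a)"
    if "a \<in> A" "d a \<noteq> 0" for a
    by (rule xlnx_midpoint_strict) (use assms(4-6) that in auto)
  have "(\<Sum>a\<in>A. 2 * (f a * ln (f a))) <
      (\<Sum>a\<in>A. (f a + d a) * ln (f a + d a) + (f a - d a) * ln (f a - d a))"
  proof (rule sum_strict_mono_ex1)
    show "\<forall>a\<in>A. 2 * (f a * ln (f a)) \<le> (f a + d a) * ln (f a + d a) + (f a - d a) * ln (f a - d a)"
    proof
      fix a assume "a \<in> A"
      then show "2 * (f a * ln (f a)) \<le> (f a + d a) * ln (f a + d a) + (f a - d a) * ln (f a - d a)"
        using cell[of a] by (cases "d a = 0") simp_all
    qed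
  qed (use assms(1-3) cell in auto)
  then show ?thesis by (simp add: sum.distrib sum_distrib_left)
qed

lemma small_step_keeps_nonneg:
  fixes f d :: "'a \<Rightarrow> real"
  assumes "finite A" "\<And>a. a \<in> A \<Longrightarrow> 0 \<le> f a"
    and "\<And>a. a \<in> A \<Longrightarrow> d a \<noteq> 0 \<Longrightarrow> 0 < f a"
  shows "\<exists>e>0. \<forall>a\<in>A. \<forall>t. \<bar>t\<bar> \<le> e \<longrightarrow> 0 \<le> f a + t * d a"
proof -
  define e where "e = Min (insert 1 ((\<lambda>a. f a / \<bar>d a\<bar>) ` {a \<in> A. d a \<noteq> 0}))"
  have "0 < e" using assms by (simp add: e_def)
  moreover have "0 \<le> f a + t * d a" if a: "a \<in> A" and t: "\<bar>t\<bar> \<le> e" for a t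
  proof (cases "d a = 0")
    case True
    then show ?thesis using assms(2) a by simp
  next
    case False
    then have "e \<le> f a / \<bar>d a\<bar>" using assms(1) a by (simp add: e_def)
    then have "e * \<bar>d a\<bar> \<le> f a" using False by (simp add: le_divide_eq)
    moreover have "\<bar>t\<bar> * \<bar>d a\<bar> \<le> e * \<bar>d a\<bar>" using t by (simp add: mult_right_mono)
    ultimately show ?thesis using abs_ge_minus_self[of "t * d a"] by (simp add: abs_mult)
  qed
  ultimately show ?thesis by blast
qed

lemma coupling_entropy_eq_xlnx_sum:
  assumes "\<forall>i\<in>{1..n}. \<forall>j\<in>{1..n}. 0 \<le> P i j"
  shows "coupling_entropy n P = - xlnx_sum n P / ln 2"
proof -
  have "(if x = 0 then 0 else x * log 2 (1 / x)) = - (x * ln x) / ln 2" if "0 \<le> x" for x :: real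
    using that by (simp add: log_def ln_div)
  then have "coupling_entropy n P = (\<Sum>i=1..n. \<Sum>j=1..n. - (P i j * ln (P i j)) / ln 2)"
    unfolding coupling_entropy_def using assms by (intro sum.cong refl) auto
  then show ?thesis
    by (simp add: xlnx_sum_def sum.cartesian_product sum_divide_distrib sum_negf case_prod_unfold)
qed

lemma min_entropy_coupling_maximizes_xlnx_sum:
  assumes "min_entropy_coupling n p q P" "is_coupling n p q Q"
  shows "xlnx_sum n Q \<le> xlnx_sum n P"
proof -
  have "coupling_entropy n P \<le> coupling_entropy n Q"
    using assms by (simp add: min_entropy_coupling_def)
  moreover have "is_coupling n p q P"
    using assms(1) by (simp add: min_entropy_coupling_def)
  ultimately have "- xlnx_sum n P / ln 2 \<le> - xlnx_sum n Q / ln 2"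
    using assms(2) by (simp add: coupling_entropy_eq_xlnx_sum is_coupling_def)
  then show ?thesis by (simp add: divide_le_cancel)
qed

lemma is_coupling_add_balanced:
  assumes "is_coupling n p q P"
    and "\<forall>i\<in>{1..n}. \<forall>j\<in>{1..n}. 0 \<le> P i j + D i j"
    and "\<forall>i\<in>{1..n}. (\<Sum>j=1..n. D i j) = 0" "\<forall>j\<in>{1..n}. (\<Sum>i=1..n. D i j) = 0"
  shows "is_coupling n p q (\<lambda>i j. P i j + D i j)"
  using assms unfolding is_coupling_def by (simp add: sum.distrib)

lemma min_entropy_coupling_balanced_perturbation_zero:
  fixes P D :: "nat \<Rightarrow> nat \<Rightarrow> real"
  assumes mec: "min_entropy_coupling n p q P"
    and rows: "\<forall>i\<in>{1..n}. (\<Sum>j=1..n. D i j) = 0" and cols: "\<forall>j\<in>{1..n}. (\<Sum>i=1..n. D i j) = 0"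
    and supp: "\<forall>i\<in>{1..n}. \<forall>j\<in>{1..n}. D i j \<noteq> 0 \<longrightarrow> 0 < P i j"
    and ij: "i \<in> {1..n}" "j \<in> {1..n}"
  shows "D i j = 0"
proof (rule ccontr)
  assume nz: "D i j \<noteq> 0"
  have cP: "is_coupling n p q P" using mec by (simp add: min_entropy_coupling_def)
  then have Pnn: "\<forall>i\<in>{1..n}. \<forall>j\<in>{1..n}. 0 \<le> P i j" by (simp add: is_coupling_def)
  have "\<exists>e>0. \<forall>a\<in>{1..n} \<times> {1..n}. \<forall>t. \<bar>t\<bar> \<le> e \<longrightarrow>
      0 \<le> case_prod P a + t * case_prod D a"
    by (rule small_step_keeps_nonneg) (use Pnn supp in auto)
  then obtain e where e: "0 < e"
    and step: "\<And>x y t. x \<in> {1..n} \<Longrightarrow> y \<in> {1..n} \<Longrightarrow> \<bar>t\<bar> \<le> e \<Longrightarrow>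
      0 \<le> P x y + t * D x y"
    by auto
  have "xlnx_sum n (\<lambda>i j. P i j + t * D i j) \<le> xlnx_sum n P" if "\<bar>t\<bar> = e" for t
  proof (rule min_entropy_coupling_maximizes_xlnx_sum[OF mec is_coupling_add_balanced[OF cP]])
    show "\<forall>i\<in>{1..n}. \<forall>j\<in>{1..n}. 0 \<le> P i j + t * D i j" using step that by simp
  qed (use rows cols in \<open>simp_all add: sum_distrib_left[symmetric]\<close>)
  from this[of e] this[of "- e"] e
  have "xlnx_sum n (\<lambda>i j. P i j + e * D i j) + xlnx_sum n (\<lambda>i j. P i j - e * D i j) \<le> 2 * xlnx_sum n P"
    by simp
  moreover have "2 * xlnx_sum n P <
      xlnx_sum n (\<lambda>i j. P i j + e * D i j) + xlnx_sum n (\<lambda>i j. P i j - e * D i j)"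
    unfolding xlnx_sum_def case_prod_unfold
  proof (rule sum_xlnx_midpoint_strict[of "{1..n} \<times> {1..n}" "(i, j)"])
    fix a assume "a \<in> {1..n} \<times> {1..n}"
    then show "e * D (fst a) (snd a) \<noteq> 0 \<Longrightarrow> 0 < P (fst a) (snd a)"
      and "0 \<le> P (fst a) (snd a) + e * D (fst a) (snd a)"
      and "0 \<le> P (fst a) (snd a) - e * D (fst a) (snd a)"
      using supp step[of "fst a" "snd a" e] step[of "fst a" "snd a" "- e"] e by auto
  qed (use ij nz e in auto)
  ultimately show False by simp
qed

lemma is_cycle_nth_adj:
  assumes "is_cycle E cs" "k < length cs"
  shows "E (cs ! k) (cs ! (Suc k mod length cs))"
proof (cases "Suc k < length cs")
  case True
  then show ?thesis using assms(1) by (simp add: is_cycle_def)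
next
  case False
  with assms(2) have "Suc k = length cs" by simp
  then have "k = length cs - 1" "Suc k mod length cs = 0" by auto
  moreover have "cs \<noteq> []" using assms(2) by auto
  ultimately show ?thesis using assms(1) by (simp add: is_cycle_def last_conv_nth hd_conv_nth)
qed

lemma even_if_alternating_closed_walk:
  assumes "\<And>k. k < L \<Longrightarrow> isl (w k) \<noteq> isl (w (Suc k mod L))"
  shows "even L"
proof (rule ccontr)
  assume odd: "odd L"
  then have L: "0 < L" by (cases L) auto
  have side: "isl (w k) = (isl (w 0) = even k)" if "k < L" for k
    using that
  proof (induction k)
    case (Suc k)
    then have "isl (w k) \<noteq> isl (w (Suc k))" using assms[of k] by simp
    then show ?case using Suc by auto
  qed simp
  have "isl (w (L - 1)) \<noteq> isl (w 0)" using assms[of "L - 1"] L by simp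
  then show False using side[of "L - 1"] L odd by auto
qed

lemma alternating_sum_cyclic_pairs:
  fixes F :: "nat \<Rightarrow> real"
  assumes "even L"
  shows "(\<Sum>k<L. (-1) ^ k * (F k + F (Suc k mod L))) = 0"
proof (cases L)
  case 0
  then show ?thesis by simp
next
  case (Suc m)
  with assms have "odd m" by simp
  have "(\<Sum>k<L. (-1) ^ k * F (Suc k mod L)) = (\<Sum>k<m. (-1) ^ k * F (Suc k)) - F 0"
    using Suc \<open>odd m\<close> by (simp add: sum.lessThan_Suc)
  moreover have "(\<Sum>k<L. (-1) ^ k * F k) = F 0 + (\<Sum>k<m. (-1) ^ Suc k * F (Suc k))"
    unfolding Suc by (subst sum.lessThan_Suc_shift) simp
  ultimately show ?thesis by (simp add: distrib_left sum.distrib sum_negf)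
qed

lemma coupling_adj_isl: "coupling_adj n P a b \<Longrightarrow> isl a \<noteq> isl b"
  by (cases a; cases b) auto

lemma coupling_adj_edge:
  assumes "coupling_adj n P a b"
  obtains i j where "{a, b} = {Inl i, Inr j}"
  using assms by (cases a; cases b) (auto simp: insert_commute)

lemma coupling_adj_doubleton:
  assumes "coupling_adj n P a b" "{a, b} = {Inl i, Inr j}"
  shows "i \<in> {1..n}" "j \<in> {1..n}" "0 < P i j"
  using assms by (cases a; cases b; auto simp: doubleton_eq_iff)+

lemma coupling_adj_row_count:
  assumes "coupling_adj n P a b"
  shows "(\<Sum>j=1..n. of_bool ({a, b} = {Inl i, Inr j}) :: real) = of_bool (a = Inl i) + of_bool (b = Inl i)"
  using assms by (cases a; cases b) (auto simp: doubleton_eq_iff)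

lemma coupling_adj_col_count:
  assumes "coupling_adj n P a b"
  shows "(\<Sum>i=1..n. of_bool ({a, b} = {Inl i, Inr j}) :: real) = of_bool (a = Inr j) + of_bool (b = Inr j)"
  using assms by (cases a; cases b) (auto simp: doubleton_eq_iff)

definition cycle_flow :: "(nat + nat) list \<Rightarrow> nat \<Rightarrow> nat \<Rightarrow> real" where
  "cycle_flow cs i j =
    (\<Sum>k<length cs. (-1) ^ k * of_bool ({cs ! k, cs ! (Suc k mod length cs)} = {Inl i, Inr j}))"

lemma cycle_flow_row_sum:
  assumes "even (length cs)"
    and "\<And>k. k < length cs \<Longrightarrow> coupling_adj n P (cs ! k) (cs ! (Suc k mod length cs))"
  shows "(\<Sum>j=1..n. cycle_flow cs i j) = 0"
proof -
  have "(\<Sum>j=1..n. cycle_flow cs i j) = (\<Sum>k<length cs. (-1) ^ k *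
      (\<Sum>j=1..n. of_bool ({cs ! k, cs ! (Suc k mod length cs)} = {Inl i, Inr j})))"
    unfolding cycle_flow_def by (subst sum.swap) (simp only: sum_distrib_left)
  also have "\<dots> = (\<Sum>k<length cs. (-1) ^ k *
      (of_bool (cs ! k = Inl i) + of_bool (cs ! (Suc k mod length cs) = Inl i)))"
    by (intro sum.cong refl) (subst coupling_adj_row_count[OF assms(2)], auto)
  also have "\<dots> = 0"
    by (rule alternating_sum_cyclic_pairs[OF assms(1)])
  finally show ?thesis .
qed

lemma cycle_flow_col_sum:
  assumes "even (length cs)"
    and "\<And>k. k < length cs \<Longrightarrow> coupling_adj n P (cs ! k) (cs ! (Suc k mod length cs))"
  shows "(\<Sum>i=1..n. cycle_flow cs i j) = 0"
proof -
  have "(\<Sum>i=1..n. cycle_flow cs i j) = (\<Sum>k<length cs. (-1) ^ k *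
      (\<Sum>i=1..n. of_bool ({cs ! k, cs ! (Suc k mod length cs)} = {Inl i, Inr j})))"
    unfolding cycle_flow_def by (subst sum.swap) (simp only: sum_distrib_left)
  also have "\<dots> = (\<Sum>k<length cs. (-1) ^ k *
      (of_bool (cs ! k = Inr j) + of_bool (cs ! (Suc k mod length cs) = Inr j)))"
    by (intro sum.cong refl) (subst coupling_adj_col_count[OF assms(2)], auto)
  also have "\<dots> = 0"
    by (rule alternating_sum_cyclic_pairs[OF assms(1)])
  finally show ?thesis .
qed

lemma cycle_flow_support:
  assumes "\<And>k. k < length cs \<Longrightarrow> coupling_adj n P (cs ! k) (cs ! (Suc k mod length cs))"
    and "cycle_flow cs i j \<noteq> 0"
  shows "0 < P i j"
proof -
  obtain k where "k < length cs" "{cs ! k, cs ! (Suc k mod length cs)} = {Inl i, Inr j}"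
    using sum.not_neutral_contains_not_neutral[OF assms(2)[unfolded cycle_flow_def]] by auto
  then show ?thesis using coupling_adj_doubleton(3) assms(1) by blast
qed

lemma cycle_flow_first_edge:
  assumes "is_cycle E cs" "{cs ! 0, cs ! 1} = {Inl i, Inr j}"
  shows "cycle_flow cs i j = 1"
proof -
  let ?L = "length cs"
  have L: "3 \<le> ?L" and dist: "distinct cs" using assms(1) by (auto simp: is_cycle_def)
  then have ne: "cs \<noteq> []" by auto
  have first: "{cs ! k, cs ! (Suc k mod ?L)} = {cs ! 0, cs ! 1} \<longleftrightarrow> k = 0" if k: "k < ?L" for k
  proof
    assume "{cs ! k, cs ! (Suc k mod ?L)} = {cs ! 0, cs ! 1}"
    then consider "cs ! k = cs ! 0" | "cs ! k = cs ! 1" "cs ! (Suc k mod ?L) = cs ! 0"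
      by (auto simp: doubleton_eq_iff)
    then show "k = 0"
    proof cases
      case 1
      then show ?thesis using nth_eq_iff_index_eq[OF dist, of k 0] k ne by simp
    next
      case 2
      then have "k = 1" using nth_eq_iff_index_eq[OF dist, of k 1] k L by simp
      with 2 L have "cs ! 2 = cs ! 0" by (simp add: numeral_2_eq_2)
      then show ?thesis using nth_eq_iff_index_eq[OF dist, of 2 0] L ne by simp
    qed
  qed (use L in simp)
  have "cycle_flow cs i j = (\<Sum>k<?L. (-1) ^ k * of_bool (k = 0))"
    unfolding cycle_flow_def assms(2)[symmetric] using first by (intro sum.cong) auto
  also have "\<dots> = 1" using ne by (simp add: Int_insert_right)
  finally show ?thesis .
qed

theorem min_entropy_coupling_forest:
  assumes mec: "min_entropy_coupling n p q P"
  shows "is_forest (coupling_adj n P)"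
  unfolding is_forest_def
proof
  assume "\<exists>cs. is_cycle (coupling_adj n P) cs"
  then obtain cs where cyc: "is_cycle (coupling_adj n P) cs" ..
  have walk: "\<And>k. k < length cs \<Longrightarrow> coupling_adj n P (cs ! k) (cs ! (Suc k mod length cs))"
    using is_cycle_nth_adj[OF cyc] .
  have even: "even (length cs)"
    using walk coupling_adj_isl by (blast intro: even_if_alternating_closed_walk)
  have "3 \<le> length cs" using cyc by (simp add: is_cycle_def)
  moreover from this have "cs \<noteq> []" by auto
  ultimately have edge: "coupling_adj n P (cs ! 0) (cs ! 1)" using walk[of 0] by simp
  then obtain i j where ij: "{cs ! 0, cs ! 1} = {Inl i, Inr j}" by (rule coupling_adj_edge)
  have "cycle_flow cs i j = 0"
  proof (rule min_entropy_coupling_balanced_perturbation_zero[OF mec])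
    show "\<forall>i\<in>{1..n}. (\<Sum>j=1..n. cycle_flow cs i j) = 0"
      and "\<forall>j\<in>{1..n}. (\<Sum>i=1..n. cycle_flow cs i j) = 0"
      using cycle_flow_row_sum[OF even walk] cycle_flow_col_sum[OF even walk] by auto
    show "\<forall>i\<in>{1..n}. \<forall>j\<in>{1..n}. cycle_flow cs i j \<noteq> 0 \<longrightarrow> 0 < P i j"
      using cycle_flow_support[OF walk] by blast
    show "i \<in> {1..n}" "j \<in> {1..n}" using coupling_adj_doubleton[OF edge ij] by auto
  qed
  then show False using cycle_flow_first_edge[OF cyc ij] by simp
qed

lemma is_leaf_Inl_iff:
  assumes "i \<in> {1..n}"
  shows "is_leaf (coupling_adj n P) (coupling_vertices n) (Inl i) \<longleftrightarrow> card {j \<in> {1..n}. 0 < P i j} = 1"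
proof -
  have "{u \<in> coupling_vertices n. coupling_adj n P (Inl i) u} = Inr ` {j \<in> {1..n}. 0 < P i j}"
    using assms by (auto simp: coupling_vertices_def elim: coupling_adj.elims)
  then show ?thesis
    using assms by (simp add: is_leaf_def vdegree_def coupling_vertices_def card_image)
qed

lemma is_leaf_Inr_iff:
  assumes "j \<in> {1..n}"
  shows "is_leaf (coupling_adj n P) (coupling_vertices n) (Inr j) \<longleftrightarrow> card {i \<in> {1..n}. 0 < P i j} = 1"
proof -
  have "{u \<in> coupling_vertices n. coupling_adj n P (Inr j) u} = Inl ` {i \<in> {1..n}. 0 < P i j}"
    using assms by (auto simp: coupling_vertices_def elim: coupling_adj.elims)
  then show ?thesis
    using assms by (simp add: is_leaf_def vdegree_def coupling_vertices_def card_image)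
qed

definition rectangle_flow :: "nat \<Rightarrow> nat \<Rightarrow> nat \<Rightarrow> nat \<Rightarrow> nat \<Rightarrow> nat \<Rightarrow> real" where
  "rectangle_flow i i' j j' x y = (of_bool (x = i) - of_bool (x = i')) * (of_bool (y = j) - of_bool (y = j'))"

lemma rectangle_flow_row_sum:
  assumes "j \<in> {1..n}" "j' \<in> {1..n}"
  shows "(\<Sum>y=1..n. rectangle_flow i i' j j' x y) = 0"
  using assms by (simp add: rectangle_flow_def sum_distrib_left[symmetric] sum_subtractf)

lemma rectangle_flow_col_sum:
  assumes "i \<in> {1..n}" "i' \<in> {1..n}"
  shows "(\<Sum>x=1..n. rectangle_flow i i' j j' x y) = 0"
  using assms by (simp add: rectangle_flow_def sum_distrib_right[symmetric] sum_subtractf)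

lemma sum_add_rectangle_flow:
  fixes h :: "real \<Rightarrow> real"
  assumes "i \<in> {1..n}" "i' \<in> {1..n}" "j \<in> {1..n}" "j' \<in> {1..n}" "i \<noteq> i'" "j \<noteq> j'"
  shows "(\<Sum>(x, y) \<in> {1..n} \<times> {1..n}. h (P x y + t * rectangle_flow i i' j j' x y))
      - (\<Sum>(x, y) \<in> {1..n} \<times> {1..n}. h (P x y))
    = (h (P i j + t) - h (P i j)) + (h (P i j' - t) - h (P i j'))
      + (h (P i' j - t) - h (P i' j)) + (h (P i' j' + t) - h (P i' j'))"
proof -
  let ?C = "{(i, j), (i, j'), (i', j), (i', j')}"
  have "(\<Sum>(x, y) \<in> {1..n} \<times> {1..n}. h (P x y + t * rectangle_flow i i' j j' x y))
      - (\<Sum>(x, y) \<in> {1..n} \<times> {1..n}. h (P x y))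
    = (\<Sum>(x, y) \<in> {1..n} \<times> {1..n}. h (P x y + t * rectangle_flow i i' j j' x y) - h (P x y))"
    by (simp add: sum_subtractf case_prod_unfold)
  also have "\<dots> = (\<Sum>(x, y) \<in> ?C. h (P x y + t * rectangle_flow i i' j j' x y) - h (P x y))"
    by (rule sum.mono_neutral_right)
      (use assms in \<open>auto simp: rectangle_flow_def of_bool_def split: if_splits\<close>)
  also have "\<dots> = (h (P i j + t) - h (P i j)) + (h (P i j' - t) - h (P i j'))
      + (h (P i' j - t) - h (P i' j)) + (h (P i' j' + t) - h (P i' j'))"
    using assms by (simp add: rectangle_flow_def)
  finally show ?thesis .
qed

theorem min_entropy_coupling_max_edge_leaf:
  assumes mec: "min_entropy_coupling n p q P"
    and ij: "i \<in> {1..n}" "j \<in> {1..n}" "0 < P i j"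
    and max: "\<forall>i'\<in>{1..n}. \<forall>j'\<in>{1..n}. P i' j' \<le> P i j"
  shows "is_leaf (coupling_adj n P) (coupling_vertices n) (Inl i)
    \<or> is_leaf (coupling_adj n P) (coupling_vertices n) (Inr j)"
proof (rule ccontr)
  assume not_leaf: "\<not> ?thesis"
  have cP: "is_coupling n p q P" using mec by (simp add: min_entropy_coupling_def)
  then have Pnn: "\<forall>i\<in>{1..n}. \<forall>j\<in>{1..n}. 0 \<le> P i j" by (simp add: is_coupling_def)
  obtain j' where j': "j' \<in> {1..n}" "j' \<noteq> j" "0 < P i j'"
  proof (rule ccontr)
    assume "\<not> thesis"
    with that ij have "{y \<in> {1..n}. 0 < P i y} = {j}" by auto
    then show False using not_leaf is_leaf_Inl_iff[OF ij(1)] by simp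
  qed
  obtain i' where i': "i' \<in> {1..n}" "i' \<noteq> i" "0 < P i' j"
  proof (rule ccontr)
    assume "\<not> thesis"
    with that ij have "{x \<in> {1..n}. 0 < P x j} = {i}" by auto
    then show False using not_leaf is_leaf_Inr_iff[OF ij(2)] by simp
  qed
  have "P i' j' = 0"
  proof (rule ccontr)
    assume "P i' j' \<noteq> 0"
    with Pnn i' j' have "is_cycle (coupling_adj n P) [Inl i, Inr j, Inl i', Inr j']"
      using ij by (force simp: is_cycle_def less_Suc_eq)
    then show False using min_entropy_coupling_forest[OF mec] by (auto simp: is_forest_def)
  qed
  define t where "t = min (P i j') (P i' j)"
  let ?Q = "\<lambda>x y. P x y + t * rectangle_flow i i' j j' x y"
  have "is_coupling n p q ?Q"
  proof (rule is_coupling_add_balanced[OF cP])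
    show "\<forall>x\<in>{1..n}. \<forall>y\<in>{1..n}. 0 \<le> P x y + t * rectangle_flow i i' j j' x y"
      using Pnn ij i' j' by (auto simp: rectangle_flow_def t_def)
    show "\<forall>x\<in>{1..n}. (\<Sum>y=1..n. t * rectangle_flow i i' j j' x y) = 0"
      "\<forall>y\<in>{1..n}. (\<Sum>x=1..n. t * rectangle_flow i i' j j' x y) = 0"
      using rectangle_flow_row_sum[OF ij(2) j'(1)] rectangle_flow_col_sum[OF ij(1) i'(1)]
      by (simp_all add: sum_distrib_left[symmetric])
  qed
  moreover have "xlnx_sum n P < xlnx_sum n ?Q"
    using sum_add_rectangle_flow[OF ij(1) i'(1) ij(2) j'(1), of "\<lambda>x. x * ln x" P t]
      xlnx_rectangle_gain[of "P i j'" "P i' j" "P i j"] i' j' ij max \<open>P i' j' = 0\<close>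
    unfolding xlnx_sum_def t_def by simp
  ultimately show False using min_entropy_coupling_maximizes_xlnx_sum[OF mec] by fastforce
qed

theorem lemma2:
  fixes n :: nat and p q :: "nat \<Rightarrow> real" and P :: "nat \<Rightarrow> nat \<Rightarrow> real"
  assumes "prob_dist n p" and "prob_dist n q"
    and "min_entropy_coupling n p q P"
  shows "is_forest (coupling_adj n P) \<and>
    (\<forall>i\<in>{1..n}. \<forall>j\<in>{1..n}.
       P i j > 0 \<and> (\<forall>i'\<in>{1..n}. \<forall>j'\<in>{1..n}. P i' j' \<le> P i j) \<longrightarrow>
       is_leaf (coupling_adj n P) (coupling_vertices n) (Inl i) \<or>
       is_leaf (coupling_adj n P) (coupling_vertices n) (Inr j))"
  \<comment> \<open>The marginals need not be normalised: only the coupling constraints are used.\<close>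
  using min_entropy_coupling_forest[OF assms(3)] min_entropy_coupling_max_edge_leaf[OF assms(3)]
  by blast

end
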